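(* Let $n\ge 3$, $c\ge 1$, and let $\upsilon: UV_n(c)\to\mathrm{GL}_n(\mathbb{C})$ be the representation \[ \upsilon(\rho_i)=\mathrm{diag}\Big(I_{i-1},\begin{pmatrix}0&r_2\\ \frac1{r_2}&0\end{pmatrix},I_{n-i-1}\Big),\qquad \upsilon(\sigma_{i,t})=\mathrm{diag}\Big(I_{i-1},\begin{pmatrix}s_{1,t}&s_{2,t}\\ s_{3,t}&s_{4,t}\end{pmatrix},I_{n-i-1}\Big) \] ($1\le i\le n-1$, $1\le t\le c$) with $r_2\neq0$ and $s_{1,t}s_{4,t}-s_{2,t}s_{3,t}\ne 0$. Then $\upsilon$ is equivalent to a representation $\upsilon'$ of the form \[ \upsilon'(\rho_i)=\mathrm{diag}\Big(I_{i-1},\begin{pmatrix}0&1\\ 1&0\end{pmatrix},I_{n-i-1}\Big),\qquad \upsilon'(\sigma_{i,t})=\mathrm{diag}\Big(I_{i-1},\begin{pmatrix}s'_{1,t}&s'_{2,t}\\ s'_{3,t}&s'_{4,t}\end{pmatrix},I_{n-i-1}\Big) \] for all $1\le i\le n-1$, $1\le t\le c$, with complex numbers $s'_{j,t}$ satisfying $s'_{1,t}s'_{4,t}-s'_{2,t}s'_{3,t}\neq 0$.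
   Context: $UV_n(c)$ is the group with generators $\rho_i$ ($1\le i\le n-1$), $\sigma_{i,t}$ ($1\le i\le n-1$, $1\le t\le c$) and relations $\rho_i\rho_{i+1}\rho_i=\rho_{i+1}\rho_i\rho_{i+1}$, $\rho_i\rho_j=\rho_j\rho_i$ ($|i-j|\ge2$), $\rho_i^2=1$, $\sigma_{i,t}\sigma_{j,\ell}=\sigma_{j,\ell}\sigma_{i,t}$ ($|i-j|\ge2$), $\sigma_{i,t}\rho_j=\rho_j\sigma_{i,t}$ ($|i-j|\ge2$), $\rho_i\rho_{i+1}\sigma_{i,t}=\sigma_{i+1,t}\rho_i\rho_{i+1}$ ($1\le i\le n-2$). $\mathrm{diag}(\cdot,\cdot,\cdot)$ denotes a block diagonal matrix and $I_r$ the $r\times r$ identity. Two representations are equivalent if they are conjugate by a fixed invertible matrix. *)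

theory Defs
  imports "Jordan_Normal_Form.Matrix"
begin

text \<open>Block diagonal matrix diag(I_{i-1}, [[a,b],[c,d]], I_{n-i-1}) of size n,
  with the 2x2 block in rows/columns i, i+1 (1-based), i.e. i-1, i (0-based).\<close>
definition blk :: "nat \<Rightarrow> nat \<Rightarrow> complex \<Rightarrow> complex \<Rightarrow> complex \<Rightarrow> complex \<Rightarrow> complex mat" where
  "blk n i a b c d = mat n n (\<lambda>(j,k).
     if j = i - 1 \<and> k = i - 1 then a
     else if j = i - 1 \<and> k = i then b
     else if j = i \<and> k = i - 1 then c
     else if j = i \<and> k = i then d
     else if j = k then 1 else 0)"

definition UV_rep :: "nat \<Rightarrow> nat \<Rightarrow> (nat \<Rightarrow> complex mat) \<Rightarrow> (nat \<Rightarrow> nat \<Rightarrow> complex mat) \<Rightarrow> bool" where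
  "UV_rep n c R S \<longleftrightarrow>
    (\<forall>i\<in>{1..n-1}. R i \<in> carrier_mat n n \<and> invertible_mat (R i)) \<and>
    (\<forall>i\<in>{1..n-1}. \<forall>t\<in>{1..c}. S i t \<in> carrier_mat n n \<and> invertible_mat (S i t)) \<and>
    (\<forall>i\<in>{1..n-2}. R i * R (i+1) * R i = R (i+1) * R i * R (i+1)) \<and>
    (\<forall>i\<in>{1..n-1}. \<forall>j\<in>{1..n-1}. (i + 2 \<le> j \<or> j + 2 \<le> i) \<longrightarrow> R i * R j = R j * R i) \<and>
    (\<forall>i\<in>{1..n-1}. R i * R i = 1\<^sub>m n) \<and>
    (\<forall>i\<in>{1..n-1}. \<forall>j\<in>{1..n-1}. \<forall>t\<in>{1..c}. \<forall>l\<in>{1..c}.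
        (i + 2 \<le> j \<or> j + 2 \<le> i) \<longrightarrow> S i t * S j l = S j l * S i t) \<and>
    (\<forall>i\<in>{1..n-1}. \<forall>j\<in>{1..n-1}. \<forall>t\<in>{1..c}.
        (i + 2 \<le> j \<or> j + 2 \<le> i) \<longrightarrow> S i t * R j = R j * S i t) \<and>
    (\<forall>i\<in>{1..n-2}. \<forall>t\<in>{1..c}. R i * R (i+1) * S i t = S (i+1) t * R i * R (i+1))"

text \<open>Equivalence of two representations: conjugate by a fixed invertible matrix
  (it suffices to check this on the generators).\<close>
definition UV_equiv :: "nat \<Rightarrow> nat \<Rightarrow> (nat \<Rightarrow> complex mat) \<Rightarrow> (nat \<Rightarrow> nat \<Rightarrow> complex mat)
    \<Rightarrow> (nat \<Rightarrow> complex mat) \<Rightarrow> (nat \<Rightarrow> nat \<Rightarrow> complex mat) \<Rightarrow> bool" where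
  "UV_equiv n c R S R' S' \<longleftrightarrow>
    (\<exists>P Q. P \<in> carrier_mat n n \<and> Q \<in> carrier_mat n n \<and> P * Q = 1\<^sub>m n \<and> Q * P = 1\<^sub>m n \<and>
      (\<forall>i\<in>{1..n-1}. R' i = Q * R i * P) \<and>
      (\<forall>i\<in>{1..n-1}. \<forall>t\<in>{1..c}. S' i t = Q * S i t * P))"

end

theory Submission
  imports Defs
begin

text \<open>Conjugation by \<open>D = diag(1, r\<^sub>2, r\<^sub>2\<^sup>2, \<dots>, r\<^sub>2\<^sup>n\<^sup>-\<^sup>1)\<close> leaves
  the diagonal entries of every \<open>2 \<times> 2\<close> block unchanged and multiplies its upper
  and lower off-diagonal entries by \<open>1/r\<^sub>2\<close> and \<open>r\<^sub>2\<close> respectively. Hence it turns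
  every \<open>\<upsilon>(\<rho>\<^sub>i)\<close> into the transposition matrix and every \<open>\<upsilon>(\<sigma>\<^sub>i\<^sub>,\<^sub>t)\<close> into a block
  matrix with entries \<open>s\<^sub>1\<^sub>,\<^sub>t, s\<^sub>2\<^sub>,\<^sub>t/r\<^sub>2, s\<^sub>3\<^sub>,\<^sub>t r\<^sub>2, s\<^sub>4\<^sub>,\<^sub>t\<close> and the same
  determinant; being a conjugation, it preserves the defining relations.\<close>

lemma mult_conj_mat:
  fixes A B P Q :: "'a :: semiring_1 mat"
  assumes "A \<in> carrier_mat n n" "B \<in> carrier_mat n n"
    and "P \<in> carrier_mat n n" "Q \<in> carrier_mat n n" "P * Q = 1\<^sub>m n"
  shows "(Q * A * P) * (Q * B * P) = Q * (A * B) * P"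
proof -
  have "(Q * A * P) * (Q * B * P) = Q * A * (P * Q) * B * P"
    using assms(1-4) by (simp add: assoc_mult_mat[of _ n n _ n _ n])
  also have "\<dots> = Q * (A * B) * P"
    using assms by (simp add: assoc_mult_mat[of _ n n _ n _ n])
  finally show ?thesis .
qed

lemma invertible_conj_mat:
  fixes A P Q :: "'a :: semiring_1 mat"
  assumes A: "A \<in> carrier_mat n n" "invertible_mat A"
    and P: "P \<in> carrier_mat n n" and Q: "Q \<in> carrier_mat n n"
    and "P * Q = 1\<^sub>m n" "Q * P = 1\<^sub>m n"
  shows "invertible_mat (Q * A * P)"
proof -
  obtain B where AB: "A * B = 1\<^sub>m n" and BA: "B * A = 1\<^sub>m (dim_row B)"
    using A unfolding invertible_mat_def inverts_mat_def by auto
  have "dim_col B = n"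
    using arg_cong[OF AB, of dim_col] by simp
  moreover have "dim_row B = n"
    using arg_cong[OF BA, of dim_col] A by simp
  ultimately have B: "B \<in> carrier_mat n n"
    by blast
  have "(Q * A * P) * (Q * B * P) = 1\<^sub>m n" "(Q * B * P) * (Q * A * P) = 1\<^sub>m n"
    using mult_conj_mat[OF A(1) B P Q] mult_conj_mat[OF B A(1) P Q] AB BA B Q assms(5,6)
    by auto
  then show ?thesis
    using A B P Q unfolding invertible_mat_def inverts_mat_def by fastforce
qed

lemma UV_rep_conj:
  assumes rep: "UV_rep n c R S"
    and P: "P \<in> carrier_mat n n" and Q: "Q \<in> carrier_mat n n"
    and PQ: "P * Q = 1\<^sub>m n" and QP: "Q * P = 1\<^sub>m n"
    and R': "\<forall>i\<in>{1..n-1}. R' i = Q * R i * P"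
    and S': "\<forall>i\<in>{1..n-1}. \<forall>t\<in>{1..c}. S' i t = Q * S i t * P"
  shows "UV_rep n c R' S'"
proof -
  have R: "R i \<in> carrier_mat n n" "invertible_mat (R i)" if "i \<in> {1..n-1}" for i
    using rep that unfolding UV_rep_def by auto
  have S: "S i t \<in> carrier_mat n n" "invertible_mat (S i t)" if "i \<in> {1..n-1}" "t \<in> {1..c}" for i t
    using rep that unfolding UV_rep_def by auto
  note conj = mult_conj_mat[OF _ _ P Q PQ] invertible_conj_mat[OF _ _ P Q PQ QP]
  show ?thesis
    using rep R S P Q QP R' S' unfolding UV_rep_def
    by (auto simp: conj mult_carrier_mat[of _ n n])
      \<comment> \<open>fixing the inner dimension lets simp discharge carrier conditions of products\<close>
qed

lemma blk_carrier_mat [simp]: "blk n i a b c d \<in> carrier_mat n n"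
  by (simp add: blk_def)

lemma mat_diag_blk_mat_diag:
  assumes "1 \<le> i" "i < n" and gf: "\<And>k. k < n \<Longrightarrow> g k * f k = 1"
  shows "mat_diag n g * blk n i a b c d * mat_diag n f
           = blk n i a (g (i-1) * b * f i) (g i * c * f (i-1)) d"
proof -
  have gf': "g k * x * f k = x" if "k < n" for k x
    using gf[OF that] by (metis mult.commute mult.left_commute mult_1_right)
  have "mat_diag n g * blk n i a b c d * mat_diag n f
          = mat n n (\<lambda>(j, k). g j * blk n i a b c d $$ (j, k) * f k)"
    by (auto simp: mat_diag_mult_left[of _ n n] mat_diag_mult_right[of _ n] intro!: eq_matI)
  also have "\<dots> = blk n i a (g (i-1) * b * f i) (g i * c * f (i-1)) d"
    using assms gf' by (auto simp: blk_def intro!: eq_matI)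
  finally show ?thesis .
qed

lemma power_mult_inverse_power:
  fixes x :: "'a :: field"
  assumes "x \<noteq> 0"
  shows "x ^ k * inverse x ^ k = 1" "inverse x ^ k * x ^ k = 1"
  using assms by (simp_all add: power_mult_distrib[symmetric])

lemma mat_diag_power_blk_mat_diag:
  fixes x :: complex
  assumes "x \<noteq> 0" "1 \<le> i" "i < n"
  shows "mat_diag n (\<lambda>k. x ^ k) * blk n i a b c d * mat_diag n (\<lambda>k. inverse x ^ k)
           = blk n i a (b / x) (c * x) d"
proof -
  obtain m where "i = Suc m"
    using \<open>1 \<le> i\<close> by (cases i) auto
  then show ?thesis
    using assms by (simp add: mat_diag_blk_mat_diag power_mult_inverse_power field_simps)
qed

theorem lemma3p2:
  fixes n c :: nat and r2 :: complex and s1 s2 s3 s4 :: "nat \<Rightarrow> complex"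
  assumes "n \<ge> 3" and "c \<ge> 1"
    and "r2 \<noteq> 0"
    and "\<forall>t\<in>{1..c}. s1 t * s4 t - s2 t * s3 t \<noteq> 0"
    and "UV_rep n c (\<lambda>i. blk n i 0 r2 (1 / r2) 0) (\<lambda>i t. blk n i (s1 t) (s2 t) (s3 t) (s4 t))"
  shows "\<exists>s1' s2' s3' s4' :: nat \<Rightarrow> complex.
           (\<forall>t\<in>{1..c}. s1' t * s4' t - s2' t * s3' t \<noteq> 0) \<and>
           UV_rep n c (\<lambda>i. blk n i 0 1 1 0) (\<lambda>i t. blk n i (s1' t) (s2' t) (s3' t) (s4' t)) \<and>
           UV_equiv n c (\<lambda>i. blk n i 0 r2 (1 / r2) 0) (\<lambda>i t. blk n i (s1 t) (s2 t) (s3 t) (s4 t))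
                        (\<lambda>i. blk n i 0 1 1 0) (\<lambda>i t. blk n i (s1' t) (s2' t) (s3' t) (s4' t))"
proof -
  define Q where "Q = mat_diag n (\<lambda>k. r2 ^ k)"
  define P where "P = mat_diag n (\<lambda>k. inverse r2 ^ k)"
  have P: "P \<in> carrier_mat n n" and Q: "Q \<in> carrier_mat n n"
    by (simp_all add: P_def Q_def)
  have PQ: "P * Q = 1\<^sub>m n" and QP: "Q * P = 1\<^sub>m n"
    using assms(3) by (simp_all add: P_def Q_def power_mult_inverse_power)
  have conj_blk: "Q * blk n i a b c' d * P = blk n i a (b / r2) (c' * r2) d" if "i \<in> {1..n-1}"
    for i a b c' d
    using that mat_diag_power_blk_mat_diag[OF assms(3), of i n] by (auto simp: P_def Q_def)
  have R: "\<forall>i\<in>{1..n-1}. blk n i 0 1 1 0 = Q * blk n i 0 r2 (1 / r2) 0 * P"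
    using assms(3) by (simp add: conj_blk)
  have S: "\<forall>i\<in>{1..n-1}. \<forall>t\<in>{1..c}.
      blk n i (s1 t) (s2 t / r2) (s3 t * r2) (s4 t) = Q * blk n i (s1 t) (s2 t) (s3 t) (s4 t) * P"
    by (simp add: conj_blk)
  show ?thesis
  proof (intro exI conjI)
    show "\<forall>t\<in>{1..c}. s1 t * s4 t - s2 t / r2 * (s3 t * r2) \<noteq> 0"
      using assms(3,4) by simp
    show "UV_rep n c (\<lambda>i. blk n i 0 1 1 0) (\<lambda>i t. blk n i (s1 t) (s2 t / r2) (s3 t * r2) (s4 t))"
      by (rule UV_rep_conj[OF assms(5) P Q PQ QP]) (use R S in simp_all)
    show "UV_equiv n c (\<lambda>i. blk n i 0 r2 (1 / r2) 0) (\<lambda>i t. blk n i (s1 t) (s2 t) (s3 t) (s4 t))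
        (\<lambda>i. blk n i 0 1 1 0) (\<lambda>i t. blk n i (s1 t) (s2 t / r2) (s3 t * r2) (s4 t))"
      unfolding UV_equiv_def using P Q PQ QP R S by blast
  qed
qed

end
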